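(* Let $a\in\mathbb{R}$, $b>0$, $\mu\in\mathbb{R}$, $\lambda\in(0,1)$, $\gamma\in\mathbb{R}$ and $\Delta\in\mathbb{N}$, and consider the impulsive difference equation $$x_{n+1}=\begin{cases} f(x_n), & n\in\mathbb{N},\ n\notin\{i\Delta: i\in\mathbb{N}\},\\ f(x_n)+\gamma, & n=i\Delta \text{ for some } i\in\mathbb{N},\end{cases}$$ with $f(x)=(1-\lambda)x+\frac{a\lambda}{b}-\frac{\lambda\arctan(\mu x)}{b}$ and arbitrary initial value $x_1\in\mathbb{R}$. Then: (i) every solution $(x_n)_{n\in\mathbb{N}}$ is bounded on $\mathbb{N}$; (ii) let $A=\frac{|a|}{b}+\frac{\pi}{2b}$ and let $k_-<k_+$ be real numbers with $2A\le k_+-k_-$. If $\gamma$ satisfies $$(k_-+A)\bigl(1-(1-\lambda)^{\Delta}\bigr)\le\gamma\le (k_+-A)\bigl(1-(1-\lambda)^{\Delta}\bigr),$$ then the map $F(x)=f^{\Delta}(x)+\gamma$ maps $[k_-,k_+]$ into itself and has a fixed point $x_1^*\in[k_-,k_+]$; consequently the equation has a $\Delta$-periodic orbit (i.e. $x_{n+\Delta}=x_n$ for all $n\in\mathbb{N}$) starting from $x_1^*\in[k_-,k_+]$.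
   Context: $f^{\Delta}$ denotes the $\Delta$-fold composition of $f$. The solution of the impulsive equation satisfies $x_{i\Delta+1}=F^i(x_1)$ for all $i\in\mathbb{N}$, where $F=f^\Delta+\gamma$. This equation models a supply and demand (price expectation) model perturbed by a constant impulse $\gamma$ every $\Delta$ steps. *)

theory Defs
  imports "HOL-Analysis.Analysis"
begin

definition fmap :: "real \<Rightarrow> real \<Rightarrow> real \<Rightarrow> real \<Rightarrow> real \<Rightarrow> real" where
  "fmap a b mu lam x = (1 - lam) * x + a * lam / b - lam * arctan (mu * x) / b"

text \<open>A solution of the impulsive equation, indexed from 1 (index 0 unused):
  x (n+1) = f (x n) for n not a multiple of Delta, x (n+1) = f (x n) + gamma for n = i*Delta, i \<ge> 1.\<close>
definition is_impulsive_sol ::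
  "real \<Rightarrow> real \<Rightarrow> real \<Rightarrow> real \<Rightarrow> real \<Rightarrow> nat \<Rightarrow> (nat \<Rightarrow> real) \<Rightarrow> bool" where
  "is_impulsive_sol a b mu lam gam Delta x \<longleftrightarrow>
     (\<forall>n\<ge>1. x (Suc n) = (if (\<exists>i\<ge>1. n = i * Delta) then fmap a b mu lam (x n) + gam
                           else fmap a b mu lam (x n)))"

end

theory Submission
  imports Defs
begin

text \<open>Since \<open>\<bar>arctan\<bar> < pi/2\<close>, the map \<open>f\<close> is the linear contraction \<open>x \<mapsto> (1 - lam) x\<close>
  up to an error of at most \<open>lam A\<close>, with \<open>A = \<bar>a\<bar>/b + pi/(2b)\<close>. Iterating, \<open>f\<^sup>\<Delta>\<close> is
  \<open>x \<mapsto> (1 - lam)\<^sup>\<Delta> x\<close> up to \<open>A (1 - (1 - lam)\<^sup>\<Delta>)\<close>, which under the hypothesis on \<open>gam\<close>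
  makes \<open>F = f\<^sup>\<Delta> + gam\<close> map \<open>[km, kp]\<close> into itself; a continuous self-map of an interval
  has a fixed point. The same error bound gives \<open>\<bar>x (n+1)\<bar> \<le> (1 - lam) \<bar>x n\<bar> + const\<close>,
  hence boundedness. Periodicity follows because shifting a solution by \<open>\<Delta>\<close> yields a
  solution, and solutions are determined by their initial value.\<close>

lemma fmap_minus_linear_bound:
  assumes "b > 0" and "0 \<le> lam"
  shows "\<bar>fmap a b mu lam x - (1 - lam) * x\<bar> \<le> lam * (\<bar>a\<bar> / b + pi / (2 * b))"
proof -
  have "\<bar>a - arctan (mu * x)\<bar> \<le> \<bar>a\<bar> + pi / 2"
    using arctan_bounded[of "mu * x"] by linarith
  then have "\<bar>(a - arctan (mu * x)) / b\<bar> \<le> (\<bar>a\<bar> + pi / 2) / b"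
    using assms by (simp add: abs_div divide_right_mono)
  also have "\<dots> = \<bar>a\<bar> / b + pi / (2 * b)"
    by (simp add: add_divide_distrib)
  finally have "\<bar>lam * ((a - arctan (mu * x)) / b)\<bar> \<le> lam * (\<bar>a\<bar> / b + pi / (2 * b))"
    using \<open>0 \<le> lam\<close> by (simp add: abs_mult mult_left_mono del: times_divide_eq_right)
  moreover have "fmap a b mu lam x - (1 - lam) * x = lam * ((a - arctan (mu * x)) / b)"
    unfolding fmap_def using assms by (simp add: field_simps)
  ultimately show ?thesis
    by simp
qed

lemma funpow_minus_linear_bound:
  fixes g :: "real \<Rightarrow> real"
  assumes "0 \<le> c" and g: "\<And>y. \<bar>g y - c * y\<bar> \<le> (1 - c) * A"
  shows "\<bar>(g ^^ k) x - c ^ k * x\<bar> \<le> (1 - c ^ k) * A"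
proof (induction k)
  case 0
  then show ?case by simp
next
  case (Suc k)
  let ?y = "(g ^^ k) x"
  have "\<bar>c * ?y - c * (c ^ k * x)\<bar> \<le> c * ((1 - c ^ k) * A)"
    using Suc \<open>0 \<le> c\<close> by (simp add: abs_mult mult_left_mono flip: right_diff_distrib)
  then have "\<bar>g ?y - c ^ Suc k * x\<bar> \<le> (1 - c) * A + c * ((1 - c ^ k) * A)"
    using g[of ?y] by (simp add: mult.assoc)
  also have "\<dots> = (1 - c ^ Suc k) * A"
    by (simp add: algebra_simps)
  finally show ?case by simp
qed

lemma bounded_if_contracting_recurrence:
  fixes x :: "nat \<Rightarrow> real"
  assumes "0 \<le> c" "c < 1" and step: "\<And>n. n \<ge> m \<Longrightarrow> \<bar>x (Suc n)\<bar> \<le> c * \<bar>x n\<bar> + B"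
  shows "bounded (x ` {m..})"
proof -
  define M where "M = max \<bar>x m\<bar> (B / (1 - c))"
  have "B / (1 - c) \<le> M"
    unfolding M_def by simp
  then have B: "B \<le> M - c * M"
    using \<open>c < 1\<close> by (simp add: pos_divide_le_eq algebra_simps)
  have "\<bar>x n\<bar> \<le> M" if "m \<le> n" for n
    using that
  proof (induction n rule: dec_induct)
    case base
    then show ?case unfolding M_def by simp
  next
    case (step n)
    have "c * \<bar>x n\<bar> \<le> c * M"
      using step.IH \<open>0 \<le> c\<close> by (rule mult_left_mono)
    then show ?case
      using assms(3)[OF step.hyps(1)] B by linarith
  qed
  then show ?thesis
    unfolding bounded_iff by auto
qed

lemma interval_self_map_fixpoint:
  fixes g :: "real \<Rightarrow> real"
  assumes "continuous_on {k..l} g" and "g ` {k..l} \<subseteq> {k..l}" and "k \<le> l"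
  shows "\<exists>x\<in>{k..l}. g x = x"
proof -
  obtain x where "x \<in> {k..l}" "g x = x"
    by (rule brouwer[of "{k..l}" g]) (use assms in \<open>auto simp: image_subset_iff_funcset\<close>)
  then show ?thesis by blast
qed

lemma continuous_on_funpow:
  fixes f :: "'a::topological_space \<Rightarrow> 'a"
  assumes "continuous_on UNIV f"
  shows "continuous_on UNIV (f ^^ k)"
proof (induction k)
  case 0
  then show ?case by (simp add: continuous_on_id)
next
  case (Suc k)
  then show ?case
    using continuous_on_compose[OF Suc continuous_on_subset[OF assms]] by simp
qed

lemma continuous_on_fmap: "continuous_on UNIV (fmap a b mu lam)"
  unfolding fmap_def divide_inverse by (intro continuous_intros)

lemma impulse_time_iff_dvd:
  fixes n Delta :: nat
  assumes "n \<ge> 1"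
  shows "(\<exists>i\<ge>1. n = i * Delta) \<longleftrightarrow> Delta dvd n"
  using assms by (auto simp: dvd_def)

lemma is_impulsive_sol_Suc:
  assumes "is_impulsive_sol a b mu lam gam Delta x" and "n \<ge> 1"
  shows "x (Suc n) = (if Delta dvd n then fmap a b mu lam (x n) + gam else fmap a b mu lam (x n))"
  using assms impulse_time_iff_dvd[OF \<open>n \<ge> 1\<close>] unfolding is_impulsive_sol_def by simp

lemma is_impulsive_sol_eqI:
  assumes "is_impulsive_sol a b mu lam gam Delta x" "is_impulsive_sol a b mu lam gam Delta y"
    and "x 1 = y 1" and "n \<ge> 1"
  shows "x n = y n"
  using \<open>n \<ge> 1\<close>
proof (induction n rule: dec_induct)
  case base
  then show ?case using assms(3) by simp
next
  case (step n)
  then show ?case using is_impulsive_sol_Suc[OF assms(1)] is_impulsive_sol_Suc[OF assms(2)] by simp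
qed

lemma is_impulsive_sol_shift:
  assumes "is_impulsive_sol a b mu lam gam Delta x"
  shows "is_impulsive_sol a b mu lam gam Delta (\<lambda>n. x (n + Delta))"
proof -
  have "Delta dvd n + Delta \<longleftrightarrow> Delta dvd n" for n
    by (simp add: dvd_add_left_iff)
  then show ?thesis
    using is_impulsive_sol_Suc[OF assms] impulse_time_iff_dvd
    unfolding is_impulsive_sol_def by simp
qed

lemma is_impulsive_sol_before_impulse:
  assumes "is_impulsive_sol a b mu lam gam Delta x" and "k < Delta"
  shows "x (Suc k) = (fmap a b mu lam ^^ k) (x 1)"
  using \<open>k < Delta\<close>
proof (induction k)
  case 0
  then show ?case by simp
next
  case (Suc k)
  have "\<not> Delta dvd Suc k"
    using Suc.prems by (auto dest: dvd_imp_le)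
  then show ?case
    using Suc is_impulsive_sol_Suc[OF assms(1), of "Suc k"] by simp
qed

lemma is_impulsive_sol_return_map:
  assumes "is_impulsive_sol a b mu lam gam Delta x" and "Delta \<ge> 1"
  shows "x (1 + Delta) = (fmap a b mu lam ^^ Delta) (x 1) + gam"
proof -
  obtain m where m: "Delta = Suc m"
    using \<open>Delta \<ge> 1\<close> by (cases Delta) auto
  then show ?thesis
    using is_impulsive_sol_Suc[OF assms] is_impulsive_sol_before_impulse[OF assms(1), of m]
    by simp
qed

lemma is_impulsive_sol_periodic:
  assumes "is_impulsive_sol a b mu lam gam Delta x" and "Delta \<ge> 1"
    and "(fmap a b mu lam ^^ Delta) (x 1) + gam = x 1" and "n \<ge> 1"
  shows "x (n + Delta) = x n"
  using is_impulsive_sol_eqI[OF is_impulsive_sol_shift[OF assms(1)] assms(1) _ \<open>n \<ge> 1\<close>]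
    is_impulsive_sol_return_map[OF assms(1,2)] assms(3) by simp

lemma funpow_fmap_minus_linear_bound:
  assumes "b > 0" and "0 \<le> lam" and "lam \<le> 1"
  shows "\<bar>(fmap a b mu lam ^^ k) x - (1 - lam) ^ k * x\<bar>
    \<le> (1 - (1 - lam) ^ k) * (\<bar>a\<bar> / b + pi / (2 * b))"
  using funpow_minus_linear_bound[of "1 - lam" "fmap a b mu lam"]
    fmap_minus_linear_bound[OF assms(1,2)] assms(3) by simp

lemma is_impulsive_sol_bounded:
  assumes "b > 0" and "0 < lam" and "lam < 1" and sol: "is_impulsive_sol a b mu lam gam Delta x"
  shows "bounded (x ` {1..})"
proof (rule bounded_if_contracting_recurrence)
  fix n :: nat
  assume "n \<ge> 1"
  have "\<bar>fmap a b mu lam (x n)\<bar> \<le> (1 - lam) * \<bar>x n\<bar> + lam * (\<bar>a\<bar> / b + pi / (2 * b))"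
    using fmap_minus_linear_bound[OF \<open>b > 0\<close>, of lam a mu "x n"] abs_mult[of "1 - lam" "x n"] assms
    by simp
  then show "\<bar>x (Suc n)\<bar> \<le> (1 - lam) * \<bar>x n\<bar> + (lam * (\<bar>a\<bar> / b + pi / (2 * b)) + \<bar>gam\<bar>)"
    using is_impulsive_sol_Suc[OF sol \<open>n \<ge> 1\<close>] by auto
qed (use assms in auto)

lemma perturbed_linear_map_maps_interval:
  fixes g :: "real \<Rightarrow> real"
  assumes "0 \<le> q" and g: "\<And>y. \<bar>g y - q * y\<bar> \<le> (1 - q) * A"
    and "(km + A) * (1 - q) \<le> gam" and "gam \<le> (kp - A) * (1 - q)"
  shows "(\<lambda>y. g y + gam) ` {km..kp} \<subseteq> {km..kp}"
proof (rule image_subsetI)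
  fix y assume "y \<in> {km..kp}"
  then have "q * km \<le> q * y" "q * y \<le> q * kp"
    using \<open>0 \<le> q\<close> by (simp_all add: mult_left_mono)
  then show "g y + gam \<in> {km..kp}"
    using g[of y] assms(3,4) unfolding abs_le_iff by (simp add: algebra_simps)
qed

theorem theorem1:
  fixes a b mu lam gam :: real and Delta :: nat
  assumes "b > 0" and "0 < lam" and "lam < 1" and "Delta \<ge> 1"
  shows "(\<forall>x. is_impulsive_sol a b mu lam gam Delta x \<longrightarrow> bounded (x ` {1..}))
    \<and> (\<forall>km kp. let A = \<bar>a\<bar> / b + pi / (2 * b);
                    F = (\<lambda>y. (fmap a b mu lam ^^ Delta) y + gam) in
         km < kp \<longrightarrow> 2 * A \<le> kp - km \<longrightarrow>
         (km + A) * (1 - (1 - lam) ^ Delta) \<le> gam \<longrightarrow>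
         gam \<le> (kp - A) * (1 - (1 - lam) ^ Delta) \<longrightarrow>
           F ` {km..kp} \<subseteq> {km..kp} \<and>
           (\<exists>xs\<in>{km..kp}. F xs = xs \<and>
              (\<forall>x. is_impulsive_sol a b mu lam gam Delta x \<and> x 1 = xs \<longrightarrow>
                   (\<forall>n\<ge>1. x (n + Delta) = x n))))"
proof -
  define A where "A = \<bar>a\<bar> / b + pi / (2 * b)"
  define F where "F = (\<lambda>y. (fmap a b mu lam ^^ Delta) y + gam)"
  have invariant: "F ` {km..kp} \<subseteq> {km..kp}"
    if "(km + A) * (1 - (1 - lam) ^ Delta) \<le> gam" "gam \<le> (kp - A) * (1 - (1 - lam) ^ Delta)"
    for km kp
  proof -
    have "\<bar>(fmap a b mu lam ^^ Delta) y - (1 - lam) ^ Delta * y\<bar> \<le> (1 - (1 - lam) ^ Delta) * A" for y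
      unfolding A_def using funpow_fmap_minus_linear_bound assms by simp
    then show ?thesis
      unfolding F_def using perturbed_linear_map_maps_interval[OF _ _ that] assms by simp
  qed
  have continuous: "continuous_on {km..kp} F" for km kp
    unfolding F_def
    by (intro continuous_intros continuous_on_subset[OF continuous_on_funpow[OF continuous_on_fmap]]) auto
  show ?thesis
    unfolding Let_def A_def[symmetric] F_def[symmetric]
  proof (intro conjI allI impI)
    show "bounded (x ` {1..})" if "is_impulsive_sol a b mu lam gam Delta x" for x
      using is_impulsive_sol_bounded[OF assms(1-3) that] .
    fix km kp :: real
    assume "km < kp" "2 * A \<le> kp - km"
      and gam_bounds: "(km + A) * (1 - (1 - lam) ^ Delta) \<le> gam"
        "gam \<le> (kp - A) * (1 - (1 - lam) ^ Delta)"
    show invariant_km_kp: "F ` {km..kp} \<subseteq> {km..kp}"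
      by (rule invariant[OF gam_bounds])
    obtain xs where "xs \<in> {km..kp}" "F xs = xs"
      using interval_self_map_fixpoint[OF continuous invariant_km_kp] \<open>km < kp\<close> by auto
    moreover have "x (n + Delta) = x n"
      if "is_impulsive_sol a b mu lam gam Delta x" "x 1 = xs" "n \<ge> 1" for x n
      using is_impulsive_sol_periodic[OF that(1) \<open>Delta \<ge> 1\<close> _ that(3)] that(2) \<open>F xs = xs\<close>
      unfolding F_def by simp
    ultimately show "\<exists>xs\<in>{km..kp}. F xs = xs \<and>
        (\<forall>x. is_impulsive_sol a b mu lam gam Delta x \<and> x 1 = xs \<longrightarrow> (\<forall>n\<ge>1. x (n + Delta) = x n))"
      by blast
  qed
qed

end
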